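(* Let $\alpha\in(0,1)$. Assume the setting described in the context, and assume: (i) (concentration over calibration data) there exist $\varepsilon_{\mathrm{cal}},\delta_{\mathrm{cal}}\in(0,1)$ such that for every measurable $q:(\mathcal{X}\times\mathcal{Y})^{n_{\mathrm{train}}}\to\mathbb{R}$, \[\mathbb{P}\left[\left|\frac{1}{n_{\mathrm{cal}}}\sum_{i\in I_{\mathrm{cal}}}\mathbf{1}\{\widehat{s}_{\mathrm{train}}(X_i,Y_i)\le q_{\mathrm{train}}\}-P_{q,\mathrm{train}}\right|\le\varepsilon_{\mathrm{cal}}\right]\ge 1-\delta_{\mathrm{cal}};\] (ii) (concentration over test data) there exist $\varepsilon_{\mathrm{test}},\delta_{\mathrm{test}}\in(0,1)$ such that for every measurable $q:(\mathcal{X}\times\mathcal{Y})^{n_{\mathrm{train}}}\to\mathbb{R}$, \[\mathbb{P}\left[\left|P_{q,\mathrm{train}}-\frac{1}{n_{\mathrm{test}}}\sum_{i\in I_{\mathrm{test}}}\mathbf{1}\{\widehat{s}_{\mathrm{train}}(X_i,Y_i)\le q_{\mathrm{train}}\}\right|\le\varepsilon_{\mathrm{test}}\right]\ge 1-\delta_{\mathrm{test}}.\] Let $\eta=\varepsilon_{\mathrm{cal}}+\varepsilon_{\mathrm{test}}$. Then \[\mathbb{P}\left[\frac{1}{n_{\mathrm{test}}}\sum_{i\in I_{\mathrm{test}}}\mathbf{1}\{Y_i\in C_{1-\alpha}(X_i)\}\ge 1-\alpha-\eta\right]\ge 1-\delta_{\mathrm{cal}}-\delta_{\mathrm{test}}.\]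 Additionally, if $\widehat{s}_{\mathrm{train}}(X_*,Y_* )$ almost surely has a continuous distribution conditionally on the training data, then \[\mathbb{P}\left[\left|\frac{1}{n_{\mathrm{test}}}\sum_{i\in I_{\mathrm{test}}}\mathbf{1}\{Y_i\in C_{1-\alpha}(X_i)\}-(1-\alpha)\right|\le\eta\right]\ge 1-2\delta_{\mathrm{cal}}-2\delta_{\mathrm{test}}.\]
   Context: Let $\mathcal{X},\mathcal{Y}$ be measurable spaces. The sample $(X_i,Y_i)_{i=1}^n$ consists of random pairs in $\mathcal{X}\times\mathcal{Y}$, and $(X_*,Y_* )$ is an additional random pair, independent of the sample, with $(X_i,Y_i)\sim(X_*,Y_* )$ for all $i\in\{1,\dots,n\}$. Write $n=n_{\mathrm{train}}+n_{\mathrm{cal}}+n_{\mathrm{test}}$ with positive integers, $I_{\mathrm{train}}=\{1,\dots,n_{\mathrm{train}}\}$, $I_{\mathrm{cal}}=\{n_{\mathrm{train}}+1,\dots,n_{\mathrm{train}}+n_{\mathrm{cal}}\}$, $I_{\mathrm{test}}=\{n_{\mathrm{train}}+n_{\mathrm{cal}}+1,\dots,n\}$. Let $s:(\mathcal{X}\times\mathcal{Y})^{n_{\mathrm{train}}+1}\to\mathbb{R}$ be any (measurable) function and $\widehat{s}_{\mathrm{train}}(x,y)=s((X_i,Y_i)_{i\in I_{\mathrm{train}}},(x,y))$. For $\phi\in[0,1)$, $\widehat{q}_{\phi,\mathrm{cal}}=\inf\{t\in\mathbb{R}:\frac{1}{n_{\mathrm{cal}}}\sum_{i\in I_{\mathrm{cal}}}\mathbf{1}\{\widehat{s}_{\mathrm{train}}(X_i,Y_i)\le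 t\}\ge\phi\}$ and $C_\phi(x)=\{y\in\mathcal{Y}:\widehat{s}_{\mathrm{train}}(x,y)\le\widehat{q}_{\phi,\mathrm{cal}}\}$. For measurable $q:(\mathcal{X}\times\mathcal{Y})^{n_{\mathrm{train}}}\to\mathbb{R}$, $q_{\mathrm{train}}=q((X_i,Y_i)_{i\in I_{\mathrm{train}}})$ and $P_{q,\mathrm{train}}=\mathbb{P}[\widehat{s}_{\mathrm{train}}(X_*,Y_* )\le q_{\mathrm{train}}\mid (X_i,Y_i)_{i\in I_{\mathrm{train}}}]$. *)

theory Defs
  imports "HOL-Probability.Probability"
begin

definition I_train :: "nat \<Rightarrow> nat set" where
  "I_train ntr = {1..ntr}"

definition I_cal :: "nat \<Rightarrow> nat \<Rightarrow> nat set" where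
  "I_cal ntr ncal = {ntr + 1..ntr + ncal}"

definition I_test :: "nat \<Rightarrow> nat \<Rightarrow> nat \<Rightarrow> nat set" where
  "I_test ntr ncal nte = {ntr + ncal + 1..ntr + ncal + nte}"

definition train_data ::
  "(nat \<Rightarrow> 'w \<Rightarrow> 'x) \<Rightarrow> (nat \<Rightarrow> 'w \<Rightarrow> 'y) \<Rightarrow> nat \<Rightarrow> 'w \<Rightarrow> (nat \<Rightarrow> 'x \<times> 'y)" where
  "train_data X Y ntr \<omega> = (\<lambda>i\<in>I_train ntr. (X i \<omega>, Y i \<omega>))"

definition s_hat ::
  "((nat \<Rightarrow> 'x \<times> 'y) \<Rightarrow> 'x \<times> 'y \<Rightarrow> real) \<Rightarrow> (nat \<Rightarrow> 'w \<Rightarrow> 'x) \<Rightarrow> (nat \<Rightarrow> 'w \<Rightarrow> 'y)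
    \<Rightarrow> nat \<Rightarrow> 'w \<Rightarrow> 'x \<Rightarrow> 'y \<Rightarrow> real" where
  "s_hat s X Y ntr \<omega> x y = s (train_data X Y ntr \<omega>) (x, y)"

definition q_hat_cal ::
  "((nat \<Rightarrow> 'x \<times> 'y) \<Rightarrow> 'x \<times> 'y \<Rightarrow> real) \<Rightarrow> (nat \<Rightarrow> 'w \<Rightarrow> 'x) \<Rightarrow> (nat \<Rightarrow> 'w \<Rightarrow> 'y)
    \<Rightarrow> nat \<Rightarrow> nat \<Rightarrow> real \<Rightarrow> 'w \<Rightarrow> real" where
  "q_hat_cal s X Y ntr ncal \<phi> \<omega> =
     Inf {t::real. (1 / real ncal) * (\<Sum>i\<in>I_cal ntr ncal.
            (if s_hat s X Y ntr \<omega> (X i \<omega>) (Y i \<omega>) \<le> t then 1 else 0)) \<ge> \<phi>}"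

definition conf_set ::
  "((nat \<Rightarrow> 'x \<times> 'y) \<Rightarrow> 'x \<times> 'y \<Rightarrow> real) \<Rightarrow> (nat \<Rightarrow> 'w \<Rightarrow> 'x) \<Rightarrow> (nat \<Rightarrow> 'w \<Rightarrow> 'y)
    \<Rightarrow> nat \<Rightarrow> nat \<Rightarrow> real \<Rightarrow> 'w \<Rightarrow> 'x \<Rightarrow> 'y set" where
  "conf_set s X Y ntr ncal \<phi> \<omega> x =
     {y. s_hat s X Y ntr \<omega> x y \<le> q_hat_cal s X Y ntr ncal \<phi> \<omega>}"

text \<open>P_{q,train}: conditional probability of s_hat_train(X_*,Y_*) \<le> q_train given the
  training data. Since (X_*,Y_*) is independent of the sample, the function
  t \<mapsto> P[s(t,(X_*,Y_*)) \<le> q(t)] evaluated at the training sample is a version of it.\<close>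
definition P_q_train ::
  "'w measure \<Rightarrow> ((nat \<Rightarrow> 'x \<times> 'y) \<Rightarrow> 'x \<times> 'y \<Rightarrow> real) \<Rightarrow> ((nat \<Rightarrow> 'x \<times> 'y) \<Rightarrow> real)
    \<Rightarrow> (nat \<Rightarrow> 'w \<Rightarrow> 'x) \<Rightarrow> (nat \<Rightarrow> 'w \<Rightarrow> 'y) \<Rightarrow> ('w \<Rightarrow> 'x) \<Rightarrow> ('w \<Rightarrow> 'y)
    \<Rightarrow> nat \<Rightarrow> 'w \<Rightarrow> real" where
  "P_q_train M s q X Y Xs Ys ntr \<omega> =
     (let t = train_data X Y ntr \<omega> in
        measure M {\<omega>' \<in> space M. s t (Xs \<omega>', Ys \<omega>') \<le> q t})"

text \<open>Independence of two random elements with possibly different value spaces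
  (the library's indep_var requires a common value type).\<close>
definition indep_rv :: "'w measure \<Rightarrow> 'a measure \<Rightarrow> ('w \<Rightarrow> 'a) \<Rightarrow> 'b measure \<Rightarrow> ('w \<Rightarrow> 'b) \<Rightarrow> bool" where
  "indep_rv M Ma A Mb B \<longleftrightarrow> A \<in> measurable M Ma \<and> B \<in> measurable M Mb \<and>
     (\<forall>S\<in>sets Ma. \<forall>T\<in>sets Mb.
        measure M (A -` S \<inter> B -` T \<inter> space M) = measure M (A -` S \<inter> space M) * measure M (B -` T \<inter> space M))"

end

theory Submission
  imports Defs
begin

text \<open>
  Write \<open>F\<^sub>t\<close> for the cdf of the score of a fresh point when the training sample is \<open>t\<close>, and
  \<open>q\<^sub>p(t)\<close> for its \<open>p\<close>-quantile. The calibration quantile satisfies \<open>q_cal \<le> c\<close> iff the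
  empirical calibration cdf at \<open>c\<close> is at least \<open>1 - \<alpha>\<close>, and the test coverage is the empirical
  test cdf at \<open>q_cal\<close>. For \<open>p = 1 - \<alpha> - \<epsilon>cal\<close>, calibration concentration at levels just left of
  \<open>q\<^sub>p(t)\<close>, where \<open>F\<^sub>t < p\<close>, gives \<open>q\<^sub>p(t) \<le> q_cal\<close> with probability \<open>1 - \<delta>cal\<close>; test
  concentration at \<open>q\<^sub>p(t)\<close> then bounds the coverage below by \<open>F\<^sub>t(q\<^sub>p(t)) - \<epsilon>test \<ge> p - \<epsilon>test\<close>.
  Symmetrically, for \<open>p = 1 - \<alpha> + \<epsilon>cal\<close> one gets \<open>q_cal \<le> q\<^sub>p(t)\<close>, and if \<open>F\<^sub>t\<close> has no atoms
  then \<open>F\<^sub>t(q\<^sub>p(t)) = p\<close>, which bounds the coverage above. Union bounds combine the events.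
\<close>

text \<open>No measurability is needed: a non-measurable set has measure \<open>0\<close>, and the bound is then trivial.\<close>

lemma (in prob_space) prob_Int_ge: "prob A + prob B - 1 \<le> prob (A \<inter> B)"
proof (cases "A \<in> events \<and> B \<in> events")
  case True
  then have "prob (A \<union> B) = prob A + prob B - prob (A \<inter> B)"
    by (simp add: measure_Un3 fmeasurable_eq_sets)
  then show ?thesis
    using prob_le_1[of "A \<union> B"] by simp
next
  case False
  then show ?thesis
    by (smt (verit) measure_nonneg measure_notin_sets prob_le_1)
qed

definition quantile :: "(real \<Rightarrow> real) \<Rightarrow> real \<Rightarrow> real" where
  "quantile F p = Inf {u. p \<le> F u}"

lemma quantile_le_iff:
  fixes F :: "real \<Rightarrow> real"
  assumes "mono F" and right_cont: "\<And>x. continuous (at_right x) F"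
    and nonempty: "\<exists>u. p \<le> F u" and bdd: "bdd_below {u. p \<le> F u}"
  shows "quantile F p \<le> c \<longleftrightarrow> p \<le> F c"
proof
  let ?q = "quantile F p"
  have "\<forall>\<^sub>F u in at_right ?q. p \<le> F u"
  proof (rule eventually_at_rightI)
    fix u assume "u \<in> {?q<..<?q + 1}"
    then obtain v where "p \<le> F v" "v < u"
      using cInf_lessD[of "{u. p \<le> F u}" u] nonempty by (auto simp: quantile_def)
    then show "p \<le> F u"
      using \<open>mono F\<close> by (meson less_imp_le monoD order_trans)
  qed simp
  then have "p \<le> F ?q"
    using right_cont[of ?q] by (intro tendsto_lowerbound) (auto simp: continuous_within)
  then show "p \<le> F c" if "?q \<le> c"
    using \<open>mono F\<close> that by (meson monoD order_trans)
next
  show "quantile F p \<le> c" if "p \<le> F c"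
    unfolding quantile_def using that bdd by (intro cInf_lower) auto
qed

lemma quantile_value_le:
  fixes F :: "real \<Rightarrow> real"
  assumes bdd: "bdd_below {u. p \<le> F u}" and cont: "isCont F (quantile F p)"
  shows "F (quantile F p) \<le> p"
proof -
  let ?q = "quantile F p"
  have "\<forall>\<^sub>F u in at_left ?q. F u \<le> p"
  proof (rule eventually_at_leftI)
    fix u assume "u \<in> {?q - 1<..<?q}"
    then have "\<not> p \<le> F u"
      using bdd cInf_lower[of u "{u. p \<le> F u}"] by (auto simp: quantile_def)
    then show "F u \<le> p" by simp
  qed simp
  then show ?thesis
    using cont by (intro tendsto_upperbound[of F _ "at_left ?q"])
      (auto simp: isCont_def filterlim_at_split)
qed

lemma borel_measurable_quantile:
  assumes "\<And>x c. x \<in> space N \<Longrightarrow> quantile (F x) p \<le> c \<longleftrightarrow> p \<le> F x c"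
    and "\<And>c. (\<lambda>x. F x c) \<in> borel_measurable N"
  shows "(\<lambda>x. quantile (F x) p) \<in> borel_measurable N"
  unfolding borel_measurable_iff_le
proof
  fix c
  have [measurable]: "(\<lambda>x. F x c) \<in> borel_measurable N" by fact
  have "{x \<in> space N. quantile (F x) p \<le> c} = {x \<in> space N. p \<le> F x c}"
    using assms(1) by blast
  also have "\<dots> \<in> sets N" by measurable
  finally show "{x \<in> space N. quantile (F x) p \<le> c} \<in> sets N" .
qed

definition ecdf :: "'i set \<Rightarrow> ('i \<Rightarrow> real) \<Rightarrow> real \<Rightarrow> real" where
  "ecdf I a c = 1 / real (card I) * (\<Sum>i\<in>I. if a i \<le> c then 1 else 0)"

lemma mono_ecdf: "mono (ecdf I a)"
  unfolding ecdf_def by (intro monoI mult_left_mono sum_mono) auto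

lemma ecdf_nonneg: "0 \<le> ecdf I a c"
  unfolding ecdf_def by (intro mult_nonneg_nonneg sum_nonneg) auto

lemma ecdf_le_1: "ecdf I a c \<le> 1"
proof -
  have "(\<Sum>i\<in>I. if a i \<le> c then 1 else 0) \<le> real (card I)"
    using sum_mono[of I "\<lambda>i. if a i \<le> c then 1 else 0" "\<lambda>_. 1::real"] by auto
  then show ?thesis
    by (cases "card I = 0") (auto simp: ecdf_def field_simps)
qed

lemma ecdf_eq_1: "finite I \<Longrightarrow> I \<noteq> {} \<Longrightarrow> (\<And>i. i \<in> I \<Longrightarrow> a i \<le> c) \<Longrightarrow> ecdf I a c = 1"
  by (simp add: ecdf_def)

lemma ecdf_eq_0: "(\<And>i. i \<in> I \<Longrightarrow> c < a i) \<Longrightarrow> ecdf I a c = 0"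
  by (simp add: ecdf_def not_le[symmetric])

lemma continuous_at_right_ecdf: "continuous (at_right x) (ecdf I a)"
proof -
  have "\<forall>\<^sub>F c in at_right x. (if a i \<le> c then 1 else 0 :: real) = (if a i \<le> x then 1 else 0)" for i
  proof (cases "a i \<le> x")
    case True
    then show ?thesis by (intro eventually_at_rightI[of x "x + 1"]) auto
  next
    case False
    then show ?thesis by (intro eventually_at_rightI[of x "a i"]) auto
  qed
  then have "continuous (at_right x) (\<lambda>c. if a i \<le> c then 1 else 0 :: real)" for i
    unfolding continuous_within by (rule tendsto_eventually)
  then show ?thesis
    unfolding ecdf_def by (intro continuous_intros)
qed

lemma quantile_ecdf_le_iff:
  assumes "finite I" "I \<noteq> {}" "0 < p" "p \<le> 1"
  shows "quantile (ecdf I a) p \<le> c \<longleftrightarrow> p \<le> ecdf I a c"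
proof (rule quantile_le_iff[OF mono_ecdf continuous_at_right_ecdf])
  show "\<exists>u. p \<le> ecdf I a u"
    using assms by (intro exI[of _ "Max (a ` I)"]) (simp add: ecdf_eq_1)
  have "Min (a ` I) \<le> u" if "p \<le> ecdf I a u" for u
  proof (rule ccontr)
    assume "\<not> Min (a ` I) \<le> u"
    moreover have "Min (a ` I) \<le> a i" if "i \<in> I" for i
      using assms that by simp
    ultimately have "ecdf I a u = 0"
      by (intro ecdf_eq_0) force
    with that \<open>0 < p\<close> show False by simp
  qed
  then show "bdd_below {u. p \<le> ecdf I a u}"
    by (intro bdd_belowI) auto
qed

lemma borel_measurable_ecdf [measurable]:
  assumes [measurable]: "\<And>i. i \<in> I \<Longrightarrow> a i \<in> borel_measurable M" "h \<in> borel_measurable M"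
  shows "(\<lambda>x. ecdf I (\<lambda>i. a i x) (h x)) \<in> borel_measurable M"
  unfolding ecdf_def by measurable

lemma (in real_distribution) bdd_below_cdf_superlevel:
  assumes "0 < p" shows "bdd_below {u. p \<le> cdf M u}"
proof -
  obtain b where b: "\<And>u. u \<le> b \<Longrightarrow> cdf M u < p"
    using order_tendstoD(2)[OF cdf_lim_at_bot assms] by (auto simp: eventually_at_bot_linorder)
  show ?thesis
    by (rule bdd_belowI[of _ b]) (metis b mem_Collect_eq linorder_not_le less_imp_le)
qed

lemma (in real_distribution) quantile_cdf_le_iff:
  assumes "0 < p" "p < 1" shows "quantile (cdf M) p \<le> c \<longleftrightarrow> p \<le> cdf M c"
proof (rule quantile_le_iff[OF _ cdf_is_right_cont _ bdd_below_cdf_superlevel[OF \<open>0 < p\<close>]])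
  show "mono (cdf M)"
    by (intro monoI cdf_nondecreasing)
  show "\<exists>u. p \<le> cdf M u"
    using order_tendstoD(1)[OF cdf_lim_at_top_prob \<open>p < 1\<close>]
    by (auto simp: eventually_at_top_linorder intro: less_imp_le)
qed

lemma (in real_distribution) cdf_quantile_eq:
  assumes "0 < p" "p < 1" and "measure M {quantile (cdf M) p} = 0"
  shows "cdf M (quantile (cdf M) p) = p"
proof (rule antisym)
  show "cdf M (quantile (cdf M) p) \<le> p"
    using assms by (intro quantile_value_le bdd_below_cdf_superlevel) (auto simp: isCont_cdf)
  show "p \<le> cdf M (quantile (cdf M) p)"
    using quantile_cdf_le_iff[OF assms(1,2), of "quantile (cdf M) p"] by simp
qed

lemma (in prob_space) prob_le_ge_approx:
  assumes [measurable]: "f \<in> borel_measurable M" "g \<in> borel_measurable M"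
    and approx: "\<And>n. p \<le> prob {x \<in> space M. g x - 1 / Suc n < f x}"
  shows "p \<le> prob {x \<in> space M. g x \<le> f x}"
proof -
  define B where "B n = {x \<in> space M. g x - 1 / Suc n < f x}" for n
  have [measurable]: "B n \<in> events" for n
    unfolding B_def by measurable
  have "decseq B"
  proof (rule decseq_SucI)
    fix n
    have "1 / real (Suc (Suc n)) \<le> 1 / Suc n"
      by (intro divide_left_mono) auto
    then show "B (Suc n) \<subseteq> B n"
      by (auto simp: B_def)
  qed
  then have "(\<lambda>n. prob (B n)) \<longlonglongrightarrow> prob (\<Inter>n. B n)"
    by (intro finite_Lim_measure_decseq) auto
  also have "(\<Inter>n. B n) = {x \<in> space M. g x \<le> f x}"
  proof (intro equalityI subsetI)
    fix x assume x: "x \<in> (\<Inter>n. B n)"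
    show "x \<in> {x \<in> space M. g x \<le> f x}"
    proof (rule ccontr)
      assume "x \<notin> {x \<in> space M. g x \<le> f x}"
      then have "0 < g x - f x" using x by (auto simp: B_def)
      then obtain n where "inverse (real (Suc n)) < g x - f x"
        using reals_Archimedean by blast
      moreover have "g x - 1 / Suc n < f x"
        using x by (auto simp: B_def)
      ultimately show False
        by (simp add: inverse_eq_divide)
    qed
  next
    fix x assume "x \<in> {x \<in> space M. g x \<le> f x}"
    moreover have "0 < 1 / real (Suc n)" for n
      by simp
    ultimately show "x \<in> (\<Inter>n. B n)"
      unfolding B_def by (smt (verit) mem_Collect_eq INT_I)
  qed
  finally show ?thesis
    by (rule LIMSEQ_le_const) (use approx in \<open>auto simp: B_def\<close>)
qed

lemma (in prob_space) borel_measurable_prob_section: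
  assumes Z: "Z \<in> measurable M N" and Q: "Q \<in> sets (T \<Otimes>\<^sub>M N)"
  shows "(\<lambda>t. prob {x \<in> space M. (t, Z x) \<in> Q}) \<in> borel_measurable T"
proof -
  interpret D: prob_space "distr M N Z"
    using Z by (rule prob_space_distr)
  have "sets (T \<Otimes>\<^sub>M distr M N Z) = sets (T \<Otimes>\<^sub>M N)"
    by (intro sets_pair_measure_cong) simp_all
  then have "(\<lambda>t. enn2real (emeasure (distr M N Z) (Pair t -` Q))) \<in> borel_measurable T"
    using D.measurable_emeasure_Pair Q by measurable
  moreover have "enn2real (emeasure (distr M N Z) (Pair t -` Q)) = prob {x \<in> space M. (t, Z x) \<in> Q}"
    if "t \<in> space T" for t
  proof -
    have "enn2real (emeasure (distr M N Z) (Pair t -` Q)) = prob (Z -` (Pair t -` Q) \<inter> space M)"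
      using Q that by (simp add: measure_def[symmetric] measure_distr[OF Z] sets_Pair1)
    also have "Z -` (Pair t -` Q) \<inter> space M = {x \<in> space M. (t, Z x) \<in> Q}"
      by auto
    finally show ?thesis .
  qed
  ultimately show ?thesis
    by (simp cong: measurable_cong)
qed

lemma (in prob_space) cdf_distr:
  "X \<in> borel_measurable M \<Longrightarrow> cdf (distr M borel X) c = prob {x \<in> space M. X x \<le> c}"
  by (simp add: cdf_def measure_distr vimage_def Int_def conj_commute)

lemma (in prob_space) borel_measurable_cdf_distr_section:
  assumes f: "f \<in> borel_measurable (T \<Otimes>\<^sub>M N)" and Z: "Z \<in> measurable M N"
  shows "(\<lambda>t. cdf (distr M borel (\<lambda>x. f (t, Z x))) c) \<in> borel_measurable T"
proof -
  have "(\<lambda>t. prob {x \<in> space M. (t, Z x) \<in> {y \<in> space (T \<Otimes>\<^sub>M N). f y \<le> c}}) \<in> borel_measurable T"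
    using f by (intro borel_measurable_prob_section[OF Z]) measurable
  moreover have "cdf (distr M borel (\<lambda>x. f (t, Z x))) c
      = prob {x \<in> space M. (t, Z x) \<in> {y \<in> space (T \<Otimes>\<^sub>M N). f y \<le> c}}" if "t \<in> space T" for t
    using that measurable_space[OF Z] measurable_Pair2[OF f that] Z
    by (subst cdf_distr) (auto simp: space_pair_measure intro!: arg_cong[where f = prob])
  ultimately show ?thesis
    by (simp cong: measurable_cong)
qed

text \<open>
  \<open>D t\<close> is the law of the score of a fresh point when the training sample is \<open>t\<close>. As the fresh
  point is independent of the sample, \<open>D (train x)\<close> is the conditional law of the test score
  given the training data, and its cdf at \<open>q (train x)\<close> is \<open>P_q_train\<close>.
\<close>

locale split_conformal = prob_space M for M :: "'w measure" +
  fixes T :: "'t measure" and train :: "'w \<Rightarrow> 't" and D :: "'t \<Rightarrow> real measure"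
    and Ical Itest :: "'i set" and score :: "'i \<Rightarrow> 'w \<Rightarrow> real"
    and \<alpha> \<epsilon>cal \<delta>cal \<epsilon>test \<delta>test :: real
  assumes measurable_train [measurable]: "train \<in> measurable M T"
    and real_distribution_D: "t \<in> space T \<Longrightarrow> real_distribution (D t)"
    and borel_measurable_cdf_D [measurable]: "(\<lambda>t. cdf (D t) c) \<in> borel_measurable T"
    and finite_Ical: "finite Ical" and Ical_nonempty: "Ical \<noteq> {}"
    and borel_measurable_score [measurable]: "\<And>i. i \<in> Ical \<union> Itest \<Longrightarrow> score i \<in> borel_measurable M"
    and \<alpha>: "0 < \<alpha>" "\<alpha> < 1"
    and nonneg: "0 \<le> \<epsilon>cal" "0 \<le> \<epsilon>test" "0 \<le> \<delta>cal" "0 \<le> \<delta>test"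
    and concentration_cal: "\<And>q. q \<in> borel_measurable T \<Longrightarrow> 1 - \<delta>cal \<le> prob {x \<in> space M.
          \<bar>ecdf Ical (\<lambda>i. score i x) (q (train x)) - cdf (D (train x)) (q (train x))\<bar> \<le> \<epsilon>cal}"
    and concentration_test: "\<And>q. q \<in> borel_measurable T \<Longrightarrow> 1 - \<delta>test \<le> prob {x \<in> space M.
          \<bar>cdf (D (train x)) (q (train x)) - ecdf Itest (\<lambda>i. score i x) (q (train x))\<bar> \<le> \<epsilon>test}"
begin

definition q_cal :: "'w \<Rightarrow> real" where
  "q_cal x = quantile (ecdf Ical (\<lambda>i. score i x)) (1 - \<alpha>)"

definition coverage :: "'w \<Rightarrow> real" where
  "coverage x = ecdf Itest (\<lambda>i. score i x) (q_cal x)"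

lemma q_cal_le_iff: "q_cal x \<le> c \<longleftrightarrow> 1 - \<alpha> \<le> ecdf Ical (\<lambda>i. score i x) c"
  unfolding q_cal_def using finite_Ical Ical_nonempty \<alpha> by (intro quantile_ecdf_le_iff) auto

lemma borel_measurable_q_cal [measurable]: "q_cal \<in> borel_measurable M"
  unfolding q_cal_def using q_cal_le_iff
  by (intro borel_measurable_quantile) (auto simp: q_cal_def)

lemma borel_measurable_coverage [measurable]: "coverage \<in> borel_measurable M"
  unfolding coverage_def by measurable

definition q_cond :: "real \<Rightarrow> 't \<Rightarrow> real" where
  "q_cond p t = quantile (cdf (D t)) p"

lemma q_cond_le_iff:
  assumes "x \<in> space M" "0 < p" "p < 1"
  shows "q_cond p (train x) \<le> c \<longleftrightarrow> p \<le> cdf (D (train x)) c"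
  unfolding q_cond_def using assms measurable_space[OF measurable_train]
  by (intro real_distribution.quantile_cdf_le_iff real_distribution_D) auto

lemma borel_measurable_q_cond [measurable]:
  assumes "0 < p" "p < 1" shows "q_cond p \<in> borel_measurable T"
  unfolding q_cond_def[abs_def] using assms
  by (intro borel_measurable_quantile real_distribution.quantile_cdf_le_iff real_distribution_D) auto

lemma q_cond_le_q_cal:
  assumes p: "0 < p" "p < 1" and "p + \<epsilon>cal \<le> 1 - \<alpha>"
  shows "1 - \<delta>cal \<le> prob {x \<in> space M. q_cond p (train x) \<le> q_cal x}"
proof (rule prob_le_ge_approx)
  \<comment> \<open>Concentration is applied just left of the quantile, where the cdf is below p.\<close>
  fix n
  let ?c = "\<lambda>x. q_cond p (train x) - 1 / Suc n"
  have sub: "{x \<in> space M. \<bar>ecdf Ical (\<lambda>i. score i x) (?c x) - cdf (D (train x)) (?c x)\<bar> \<le> \<epsilon>cal}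
      \<subseteq> {x \<in> space M. ?c x < q_cal x}"
  proof safe
    fix x assume x: "x \<in> space M"
      and close: "\<bar>ecdf Ical (\<lambda>i. score i x) (?c x) - cdf (D (train x)) (?c x)\<bar> \<le> \<epsilon>cal"
    have "cdf (D (train x)) (?c x) < p"
      using q_cond_le_iff[OF x p, of "?c x"] by simp
    then have "ecdf Ical (\<lambda>i. score i x) (?c x) < 1 - \<alpha>"
      using close assms(3) by (simp add: abs_le_iff)
    then show "?c x < q_cal x"
      using q_cal_le_iff[of x "?c x"] by simp
  qed
  have "(\<lambda>t. q_cond p t - 1 / Suc n) \<in> borel_measurable T"
    using p by measurable
  moreover have "{x \<in> space M. ?c x < q_cal x} \<in> events"
    using p by measurable
  ultimately show "1 - \<delta>cal \<le> prob {x \<in> space M. ?c x < q_cal x}"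
    using concentration_cal finite_measure_mono[OF sub] by (blast intro: order_trans)
qed (use p in measurable)

lemma q_cal_le_q_cond:
  assumes p: "0 < p" "p < 1" and "1 - \<alpha> \<le> p - \<epsilon>cal"
  shows "1 - \<delta>cal \<le> prob {x \<in> space M. q_cal x \<le> q_cond p (train x)}"
proof -
  let ?q = "\<lambda>x. q_cond p (train x)"
  have sub: "{x \<in> space M. \<bar>ecdf Ical (\<lambda>i. score i x) (?q x) - cdf (D (train x)) (?q x)\<bar> \<le> \<epsilon>cal}
      \<subseteq> {x \<in> space M. q_cal x \<le> ?q x}"
  proof safe
    fix x assume x: "x \<in> space M"
      and close: "\<bar>ecdf Ical (\<lambda>i. score i x) (?q x) - cdf (D (train x)) (?q x)\<bar> \<le> \<epsilon>cal"
    have "p \<le> cdf (D (train x)) (?q x)"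
      using q_cond_le_iff[OF x p, of "?q x"] by simp
    then show "q_cal x \<le> ?q x"
      using close assms(3) q_cal_le_iff by (simp add: abs_le_iff)
  qed
  moreover have "{x \<in> space M. q_cal x \<le> ?q x} \<in> events"
    using p by measurable
  ultimately show ?thesis
    using concentration_cal[OF borel_measurable_q_cond[OF p]] finite_measure_mono[OF sub]
    by (blast intro: order_trans)
qed

lemma coverage_lower_bound:
  "1 - \<delta>cal - \<delta>test \<le> prob {x \<in> space M. 1 - \<alpha> - (\<epsilon>cal + \<epsilon>test) \<le> coverage x}"
proof (cases "1 - \<alpha> - \<epsilon>cal \<le> 0")
  case True
  have "1 - \<alpha> - (\<epsilon>cal + \<epsilon>test) \<le> coverage x" for x
    using True nonneg ecdf_nonneg[of Itest "\<lambda>i. score i x" "q_cal x"]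
    by (simp add: coverage_def)
  then show ?thesis
    using nonneg by (simp add: prob_space)
next
  case False
  define p where "p = 1 - \<alpha> - \<epsilon>cal"
  have p: "0 < p" "p < 1"
    using False \<alpha> nonneg by (auto simp: p_def)
  let ?q = "\<lambda>x. q_cond p (train x)"
  let ?cal = "{x \<in> space M. ?q x \<le> q_cal x}"
  let ?test = "{x \<in> space M. \<bar>cdf (D (train x)) (?q x) - ecdf Itest (\<lambda>i. score i x) (?q x)\<bar> \<le> \<epsilon>test}"
  let ?target = "{x \<in> space M. 1 - \<alpha> - (\<epsilon>cal + \<epsilon>test) \<le> coverage x}"
  have "?cal \<inter> ?test \<subseteq> ?target"
  proof safe
    fix x assume x: "x \<in> space M" and "?q x \<le> q_cal x"
      and close: "\<bar>cdf (D (train x)) (?q x) - ecdf Itest (\<lambda>i. score i x) (?q x)\<bar> \<le> \<epsilon>test"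
    then have "ecdf Itest (\<lambda>i. score i x) (?q x) \<le> coverage x"
      unfolding coverage_def by (intro monoD[OF mono_ecdf])
    moreover have "p \<le> cdf (D (train x)) (?q x)"
      using q_cond_le_iff[OF x p, of "?q x"] by simp
    ultimately show "1 - \<alpha> - (\<epsilon>cal + \<epsilon>test) \<le> coverage x"
      using close by (simp add: p_def abs_le_iff)
  qed
  then have "prob (?cal \<inter> ?test) \<le> prob ?target"
    by (rule finite_measure_mono) measurable
  moreover have "1 - \<delta>cal \<le> prob ?cal"
    using p by (intro q_cond_le_q_cal) (auto simp: p_def)
  ultimately show ?thesis
    using prob_Int_ge[of ?cal ?test] concentration_test[OF borel_measurable_q_cond[OF p]] by linarith
qed

lemma coverage_upper_bound:
  assumes no_atoms: "AE x in M. \<forall>r. measure (D (train x)) {r} = 0"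
  shows "1 - \<delta>cal - \<delta>test \<le> prob {x \<in> space M. coverage x \<le> 1 - \<alpha> + (\<epsilon>cal + \<epsilon>test)}"
proof (cases "1 \<le> 1 - \<alpha> + \<epsilon>cal")
  case True
  have "coverage x \<le> 1 - \<alpha> + (\<epsilon>cal + \<epsilon>test)" for x
    using True nonneg ecdf_le_1[of Itest "\<lambda>i. score i x" "q_cal x"]
    by (simp add: coverage_def)
  then show ?thesis
    using nonneg by (simp add: prob_space)
next
  case False
  define p where "p = 1 - \<alpha> + \<epsilon>cal"
  have p: "0 < p" "p < 1"
    using False \<alpha> nonneg by (auto simp: p_def)
  let ?q = "\<lambda>x. q_cond p (train x)"
  let ?cal = "{x \<in> space M. q_cal x \<le> ?q x}"
  let ?test = "{x \<in> space M. \<bar>cdf (D (train x)) (?q x) - ecdf Itest (\<lambda>i. score i x) (?q x)\<bar> \<le> \<epsilon>test}"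
  let ?target = "{x \<in> space M. coverage x \<le> 1 - \<alpha> + (\<epsilon>cal + \<epsilon>test)}"
  have "AE x in M. x \<in> ?cal \<inter> ?test \<longrightarrow> x \<in> ?target"
    using AE_space no_atoms
  proof eventually_elim
    case (elim x)
    interpret Dx: real_distribution "D (train x)"
      using elim measurable_space[OF measurable_train] by (intro real_distribution_D) auto
    show ?case
    proof
      assume x: "x \<in> ?cal \<inter> ?test"
      then have "coverage x \<le> ecdf Itest (\<lambda>i. score i x) (?q x)"
        unfolding coverage_def by (intro monoD[OF mono_ecdf]) auto
      moreover have "cdf (D (train x)) (?q x) = p"
        unfolding q_cond_def using elim p by (intro Dx.cdf_quantile_eq) auto
      ultimately show "x \<in> ?target"
        using x by (simp add: p_def abs_le_iff)
    qed
  qed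
  then have "prob (?cal \<inter> ?test) \<le> prob ?target"
    by (rule finite_measure_mono_AE) measurable
  moreover have "1 - \<delta>cal \<le> prob ?cal"
    using p by (intro q_cal_le_q_cond) (auto simp: p_def)
  ultimately show ?thesis
    using prob_Int_ge[of ?cal ?test] concentration_test[OF borel_measurable_q_cond[OF p]] by linarith
qed

lemma coverage_two_sided:
  assumes "AE x in M. \<forall>r. measure (D (train x)) {r} = 0"
  shows "1 - 2 * \<delta>cal - 2 * \<delta>test \<le> prob {x \<in> space M. \<bar>coverage x - (1 - \<alpha>)\<bar> \<le> \<epsilon>cal + \<epsilon>test}"
proof -
  have "{x \<in> space M. 1 - \<alpha> - (\<epsilon>cal + \<epsilon>test) \<le> coverage x} \<inter> {x \<in> space M. coverage x \<le> 1 - \<alpha> + (\<epsilon>cal + \<epsilon>test)}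
      = {x \<in> space M. \<bar>coverage x - (1 - \<alpha>)\<bar> \<le> \<epsilon>cal + \<epsilon>test}"
    by (auto simp: abs_le_iff)
  then show ?thesis
    using prob_Int_ge coverage_lower_bound coverage_upper_bound[OF assms] by (smt (verit))
qed

end

lemma card_I_cal [simp]: "card (I_cal ntr ncal) = ncal"
  by (simp add: I_cal_def)

lemma card_I_test [simp]: "card (I_test ntr ncal nte) = nte"
  by (simp add: I_test_def)

lemma q_hat_cal_eq_quantile:
  "q_hat_cal s X Y ntr ncal \<phi> \<omega> = quantile (ecdf (I_cal ntr ncal) (\<lambda>i. s_hat s X Y ntr \<omega> (X i \<omega>) (Y i \<omega>))) \<phi>"
  by (simp add: q_hat_cal_def quantile_def ecdf_def)

lemma test_coverage_eq_ecdf: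
  "1 / real nte * (\<Sum>i\<in>I_test ntr ncal nte. if Y i \<omega> \<in> conf_set s X Y ntr ncal \<phi> \<omega> (X i \<omega>) then 1 else 0)
    = ecdf (I_test ntr ncal nte) (\<lambda>i. s_hat s X Y ntr \<omega> (X i \<omega>) (Y i \<omega>)) (q_hat_cal s X Y ntr ncal \<phi> \<omega>)"
  by (simp add: conf_set_def ecdf_def)

lemma measurable_train_data:
  assumes "\<And>i. i \<in> I_train ntr \<Longrightarrow> (\<lambda>\<omega>. (X i \<omega>, Y i \<omega>)) \<in> measurable M N"
  shows "train_data X Y ntr \<in> measurable M (PiM (I_train ntr) (\<lambda>_. N))"
  unfolding train_data_def[abs_def] using assms by (rule measurable_restrict)

lemma (in prob_space) P_q_train_eq_cdf:
  assumes "(\<lambda>\<omega>'. s (train_data X Y ntr \<omega>) (Xs \<omega>', Ys \<omega>')) \<in> borel_measurable M"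
  shows "P_q_train M s q X Y Xs Ys ntr \<omega>
    = cdf (distr M borel (\<lambda>\<omega>'. s (train_data X Y ntr \<omega>) (Xs \<omega>', Ys \<omega>'))) (q (train_data X Y ntr \<omega>))"
  by (simp add: P_q_train_def Let_def cdf_distr[OF assms])

lemma split_conformal_from_sample:
  fixes M :: "'w measure" and X :: "nat \<Rightarrow> 'w \<Rightarrow> 'x" and Y :: "nat \<Rightarrow> 'w \<Rightarrow> 'y"
    and s :: "(nat \<Rightarrow> 'x \<times> 'y) \<Rightarrow> 'x \<times> 'y \<Rightarrow> real"
  assumes P: "prob_space M" and "0 < ncal"
    and measX: "\<And>i. i \<in> {1..ntr + ncal + nte} \<Longrightarrow> X i \<in> measurable M MX"
    and measY: "\<And>i. i \<in> {1..ntr + ncal + nte} \<Longrightarrow> Y i \<in> measurable M MY"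
    and measXs: "Xs \<in> measurable M MX" and measYs: "Ys \<in> measurable M MY"
    and meas_s: "(\<lambda>(t, z). s t z) \<in> borel_measurable (PiM (I_train ntr) (\<lambda>_. MX \<Otimes>\<^sub>M MY) \<Otimes>\<^sub>M (MX \<Otimes>\<^sub>M MY))"
    and "0 < \<alpha>" "\<alpha> < 1" "0 \<le> \<epsilon>cal" "0 \<le> \<epsilon>test" "0 \<le> \<delta>cal" "0 \<le> \<delta>test"
    and conc_cal: "\<And>q. q \<in> borel_measurable (PiM (I_train ntr) (\<lambda>_. MX \<Otimes>\<^sub>M MY)) \<Longrightarrow>
        measure M {\<omega> \<in> space M.
          \<bar>(1 / real ncal) * (\<Sum>i\<in>I_cal ntr ncal.
              (if s_hat s X Y ntr \<omega> (X i \<omega>) (Y i \<omega>) \<le> q (train_data X Y ntr \<omega>) then 1 else 0))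
           - P_q_train M s q X Y Xs Ys ntr \<omega>\<bar> \<le> \<epsilon>cal} \<ge> 1 - \<delta>cal"
    and conc_test: "\<And>q. q \<in> borel_measurable (PiM (I_train ntr) (\<lambda>_. MX \<Otimes>\<^sub>M MY)) \<Longrightarrow>
        measure M {\<omega> \<in> space M.
          \<bar>P_q_train M s q X Y Xs Ys ntr \<omega>
           - (1 / real nte) * (\<Sum>i\<in>I_test ntr ncal nte.
              (if s_hat s X Y ntr \<omega> (X i \<omega>) (Y i \<omega>) \<le> q (train_data X Y ntr \<omega>) then 1 else 0))\<bar>
           \<le> \<epsilon>test} \<ge> 1 - \<delta>test"
  shows "split_conformal M (PiM (I_train ntr) (\<lambda>_. MX \<Otimes>\<^sub>M MY)) (train_data X Y ntr)
    (\<lambda>t. distr M borel (\<lambda>\<omega>. s t (Xs \<omega>, Ys \<omega>))) (I_cal ntr ncal) (I_test ntr ncal nte)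
    (\<lambda>i \<omega>. s_hat s X Y ntr \<omega> (X i \<omega>) (Y i \<omega>)) \<alpha> \<epsilon>cal \<delta>cal \<epsilon>test \<delta>test"
proof -
  interpret prob_space M by (rule P)
  let ?N = "MX \<Otimes>\<^sub>M MY" and ?train = "train_data X Y ntr"
  let ?T = "PiM (I_train ntr) (\<lambda>_. ?N)"
  have XY [measurable]: "(\<lambda>\<omega>. (X i \<omega>, Y i \<omega>)) \<in> measurable M ?N" if "i \<in> {1..ntr + ncal + nte}" for i
    using measX[OF that] measY[OF that] by measurable
  have Z: "(\<lambda>\<omega>. (Xs \<omega>, Ys \<omega>)) \<in> measurable M ?N"
    using measXs measYs by measurable
  have train [measurable]: "?train \<in> measurable M ?T"
    by (intro measurable_train_data XY) (auto simp: I_train_def)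
  have score_section: "(\<lambda>\<omega>. s t (Xs \<omega>, Ys \<omega>)) \<in> borel_measurable M" if "t \<in> space ?T" for t
    using measurable_compose[OF Z measurable_Pair2[OF meas_s that]] by simp
  have P_q: "P_q_train M s q X Y Xs Ys ntr \<omega>
      = cdf (distr M borel (\<lambda>\<omega>'. s (?train \<omega>) (Xs \<omega>', Ys \<omega>'))) (q (?train \<omega>))" if "\<omega> \<in> space M" for q \<omega>
    by (intro P_q_train_eq_cdf score_section measurable_space[OF train that])
  show ?thesis
  proof (intro split_conformal.intro split_conformal_axioms.intro)
    show "(\<lambda>t. cdf (distr M borel (\<lambda>\<omega>. s t (Xs \<omega>, Ys \<omega>))) c) \<in> borel_measurable ?T" for c
      using borel_measurable_cdf_distr_section[OF meas_s Z] by simp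
    show "(\<lambda>\<omega>. s_hat s X Y ntr \<omega> (X i \<omega>) (Y i \<omega>)) \<in> borel_measurable M"
      if "i \<in> I_cal ntr ncal \<union> I_test ntr ncal nte" for i
    proof -
      have "i \<in> {1..ntr + ncal + nte}"
        using that by (auto simp: I_cal_def I_test_def)
      then have "(\<lambda>\<omega>. (?train \<omega>, (X i \<omega>, Y i \<omega>))) \<in> measurable M (?T \<Otimes>\<^sub>M ?N)"
        by measurable
      from measurable_compose[OF this meas_s] show ?thesis
        by (simp add: s_hat_def)
    qed
  qed (use assms score_section in \<open>auto simp: I_cal_def ecdf_def P_q cong: conj_cong\<close>)
qed

theorem theorem2p2:
  fixes M :: "'w measure" and MX :: "'x measure" and MY :: "'y measure"
    and X :: "nat \<Rightarrow> 'w \<Rightarrow> 'x" and Y :: "nat \<Rightarrow> 'w \<Rightarrow> 'y"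
    and Xs :: "'w \<Rightarrow> 'x" and Ys :: "'w \<Rightarrow> 'y"
    and ntr ncal nte :: nat
    and s :: "(nat \<Rightarrow> 'x \<times> 'y) \<Rightarrow> 'x \<times> 'y \<Rightarrow> real"
    and \<alpha> \<epsilon>cal \<delta>cal \<epsilon>test \<delta>test :: real
  assumes P: "prob_space M"
    and pos: "0 < ntr" "0 < ncal" "0 < nte"
    and measX: "\<And>i. i \<in> {1..ntr + ncal + nte} \<Longrightarrow> X i \<in> measurable M MX"
    and measY: "\<And>i. i \<in> {1..ntr + ncal + nte} \<Longrightarrow> Y i \<in> measurable M MY"
    and measXs: "Xs \<in> measurable M MX" and measYs: "Ys \<in> measurable M MY"
    and ident: "\<And>i. i \<in> {1..ntr + ncal + nte} \<Longrightarrow>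
        distr M (MX \<Otimes>\<^sub>M MY) (\<lambda>\<omega>. (X i \<omega>, Y i \<omega>)) = distr M (MX \<Otimes>\<^sub>M MY) (\<lambda>\<omega>. (Xs \<omega>, Ys \<omega>))"
    and indep: "indep_rv M
        (PiM {1..ntr + ncal + nte} (\<lambda>_. MX \<Otimes>\<^sub>M MY)) (\<lambda>\<omega>. \<lambda>i\<in>{1..ntr + ncal + nte}. (X i \<omega>, Y i \<omega>))
        (MX \<Otimes>\<^sub>M MY) (\<lambda>\<omega>. (Xs \<omega>, Ys \<omega>))"
    and meas_s: "(\<lambda>(t, z). s t z) \<in> borel_measurable (PiM (I_train ntr) (\<lambda>_. MX \<Otimes>\<^sub>M MY) \<Otimes>\<^sub>M (MX \<Otimes>\<^sub>M MY))"
    and \<alpha>: "0 < \<alpha>" "\<alpha> < 1"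
    and \<epsilon>\<delta>cal: "0 < \<epsilon>cal" "\<epsilon>cal < 1" "0 < \<delta>cal" "\<delta>cal < 1"
    and \<epsilon>\<delta>test: "0 < \<epsilon>test" "\<epsilon>test < 1" "0 < \<delta>test" "\<delta>test < 1"
    and conc_cal: "\<And>q. q \<in> borel_measurable (PiM (I_train ntr) (\<lambda>_. MX \<Otimes>\<^sub>M MY)) \<Longrightarrow>
        measure M {\<omega> \<in> space M.
          \<bar>(1 / real ncal) * (\<Sum>i\<in>I_cal ntr ncal.
              (if s_hat s X Y ntr \<omega> (X i \<omega>) (Y i \<omega>) \<le> q (train_data X Y ntr \<omega>) then 1 else 0))
           - P_q_train M s q X Y Xs Ys ntr \<omega>\<bar> \<le> \<epsilon>cal} \<ge> 1 - \<delta>cal"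
    and conc_test: "\<And>q. q \<in> borel_measurable (PiM (I_train ntr) (\<lambda>_. MX \<Otimes>\<^sub>M MY)) \<Longrightarrow>
        measure M {\<omega> \<in> space M.
          \<bar>P_q_train M s q X Y Xs Ys ntr \<omega>
           - (1 / real nte) * (\<Sum>i\<in>I_test ntr ncal nte.
              (if s_hat s X Y ntr \<omega> (X i \<omega>) (Y i \<omega>) \<le> q (train_data X Y ntr \<omega>) then 1 else 0))\<bar>
           \<le> \<epsilon>test} \<ge> 1 - \<delta>test"
  shows "measure M {\<omega> \<in> space M.
           (1 / real nte) * (\<Sum>i\<in>I_test ntr ncal nte.
              (if Y i \<omega> \<in> conf_set s X Y ntr ncal (1 - \<alpha>) \<omega> (X i \<omega>) then 1 else 0))
           \<ge> 1 - \<alpha> - (\<epsilon>cal + \<epsilon>test)} \<ge> 1 - \<delta>cal - \<delta>test \<and>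
         ((AE \<omega> in M. \<forall>r::real.
            measure M {\<omega>' \<in> space M. s (train_data X Y ntr \<omega>) (Xs \<omega>', Ys \<omega>') = r} = 0) \<longrightarrow>
         measure M {\<omega> \<in> space M.
           \<bar>(1 / real nte) * (\<Sum>i\<in>I_test ntr ncal nte.
              (if Y i \<omega> \<in> conf_set s X Y ntr ncal (1 - \<alpha>) \<omega> (X i \<omega>) then 1 else 0))
            - (1 - \<alpha>)\<bar> \<le> \<epsilon>cal + \<epsilon>test} \<ge> 1 - 2 * \<delta>cal - 2 * \<delta>test)"
proof -
  let ?T = "PiM (I_train ntr) (\<lambda>_. MX \<Otimes>\<^sub>M MY)" and ?train = "train_data X Y ntr"
  define D where "D t = distr M borel (\<lambda>\<omega>. s t (Xs \<omega>, Ys \<omega>))" for t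
  define score where "score i \<omega> = s_hat s X Y ntr \<omega> (X i \<omega>) (Y i \<omega>)" for i \<omega>
  interpret split_conformal M ?T ?train D "I_cal ntr ncal" "I_test ntr ncal nte" score
    \<alpha> \<epsilon>cal \<delta>cal \<epsilon>test \<delta>test
    unfolding D_def[abs_def] score_def[abs_def]
    by (rule split_conformal_from_sample[OF P pos(2) measX measY measXs measYs meas_s \<alpha> _ _ _ _ conc_cal conc_test])
      (use \<epsilon>\<delta>cal \<epsilon>\<delta>test in auto)
  have coverage_eq: "1 / real nte * (\<Sum>i\<in>I_test ntr ncal nte.
      if Y i \<omega> \<in> conf_set s X Y ntr ncal (1 - \<alpha>) \<omega> (X i \<omega>) then 1 else 0) = coverage \<omega>" for \<omega>
    unfolding test_coverage_eq_ecdf q_hat_cal_eq_quantile by (simp add: coverage_def q_cal_def score_def)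
  have "AE \<omega> in M. \<forall>r. measure (D (?train \<omega>)) {r} = 0"
    if "AE \<omega> in M. \<forall>r. measure M {\<omega>' \<in> space M. s (?train \<omega>) (Xs \<omega>', Ys \<omega>') = r} = 0"
    using AE_space that
  proof eventually_elim
    case (elim \<omega>)
    have "s (?train \<omega>) \<in> borel_measurable (MX \<Otimes>\<^sub>M MY)"
      using measurable_Pair2[OF meas_s measurable_space[OF measurable_train elim(1)]] by simp
    from measurable_compose[OF measurable_Pair[OF measXs measYs] this] show ?case
      using elim by (simp add: D_def measure_distr vimage_def Int_def conj_commute)
  qed
  then show ?thesis
    unfolding coverage_eq using coverage_lower_bound coverage_two_sided by auto
qed

end
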